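(* Let $d\ge 2$, $x\in\mathbb{R}^d$, $V\subseteq\{1,\dots,d\}$ (of any parity), and let $\theta\in\{\pm1\}^d$ with $\theta_j=1$ for $j\in V$ and $\theta_j=-1$ for $j\notin V$. Let $v = \Pi_{\{w\in\mathbb{R}^d:\theta^\top w = |V|-1\}}(x)$ and let $F := \{w\in[0,1]^d : \theta^\top w = |V|-1\}$, assumed nonempty, and $z = \Pi_F(x)$. Let $i\in\{1,\dots,d\}$. Then: 1. If $v_i>1$ and $\theta_i = 1$, then $z_i = 1$. 2. If $v_i<0$ and $\theta_i=-1$, then $z_i=0$.
   Context: $\Pi_C(x)$ denotes the Euclidean projection of $x$ onto a closed convex set $C$. *)

theory Defs
  imports "HOL-Analysis.Analysis"
begin

end

theory Submission
  imports Defs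
begin

text \<open>Let \<open>b = |V| - 1\<close> and let the slack \<open>s\<^sub>j(w)\<close> be the distance of \<open>w\<^sub>j\<close> from \<open>1\<close>
  if \<open>j \<in> V\<close> and from \<open>0\<close> otherwise. On \<open>F\<close> the slacks are nonnegative and sum to \<open>1\<close>, so
  if \<open>s\<^sub>i(z) > 0\<close> the point \<open>z\<close> can shift the amount \<open>s\<^sub>i(z)\<close> from coordinate \<open>i\<close> to any
  coordinate \<open>k\<close> without leaving \<open>F\<close>; the variational inequality of the projection then
  gives \<open>\<theta>\<^sub>i(x\<^sub>i - z\<^sub>i) \<le> \<theta>\<^sub>k(x\<^sub>k - z\<^sub>k)\<close> for all \<open>k\<close>. Summing over \<open>k\<close> and comparing with the
  explicit hyperplane projection \<open>v = x - ((\<theta>\<^sup>T x - b) / d) \<theta>\<close> yields \<open>s\<^sub>i(z) \<le> s\<^sub>i(v)\<close>.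
  Hence \<open>s\<^sub>i(v) < 0\<close> forces \<open>s\<^sub>i(z) = 0\<close>, which is both claims at once.\<close>

lemma closest_point_hyperplane:
  fixes a x :: "'a::euclidean_space"
  assumes "a \<noteq> 0"
  shows "closest_point {w. a \<bullet> w = b} x = x - ((a \<bullet> x - b) / (a \<bullet> a)) *\<^sub>R a"
proof -
  define t where "t = (a \<bullet> x - b) / (a \<bullet> a)"
  define p where "p = x - t *\<^sub>R a"
  then have residual: "x - p = t *\<^sub>R a" by simp
  have p_mem: "a \<bullet> p = b"
    using assms by (simp add: p_def t_def inner_diff_right)
  have "dist x p \<le> dist x y" if "a \<bullet> y = b" for y
  proof -
    have "(x - p) \<bullet> (p - y) = 0"
      using p_mem that by (simp add: residual inner_diff_right)
    then have "(norm (x - y))\<^sup>2 = (norm (x - p))\<^sup>2 + (norm (p - y))\<^sup>2"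
      using norm_add_Pythagorean[of "x - p" "p - y"] by (simp add: orthogonal_def)
    then have "(norm (x - p))\<^sup>2 \<le> (norm (x - y))\<^sup>2"
      by simp
    then show ?thesis
      unfolding dist_norm by (rule power2_le_imp_le) simp
  qed
  then have "p = closest_point {w. a \<bullet> w = b} x"
    using p_mem by (intro closest_point_unique convex_hyperplane closed_hyperplane) auto
  then show ?thesis
    by (simp add: p_def t_def)
qed

lemma closest_point_feasible_direction:
  fixes x d :: "'a::euclidean_space"
  assumes "convex S" "closed S" "closest_point S x + t *\<^sub>R d \<in> S" "t > 0"
  shows "(x - closest_point S x) \<bullet> d \<le> 0"
proof -
  have "t * ((x - closest_point S x) \<bullet> d) \<le> 0"
    using closest_point_dot[OF assms(1-3), of x] by simp
  with assms(4) show ?thesis by (simp add: mult_le_0_iff)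
qed

definition sign_vector :: "'n set \<Rightarrow> real ^ 'n" where
  "sign_vector V = (\<chi> j. if j \<in> V then 1 else -1)"

definition unit_cube_slice :: "real ^ 'n \<Rightarrow> real \<Rightarrow> (real ^ 'n) set" where
  "unit_cube_slice a b = {w. (\<forall>j. 0 \<le> w $ j \<and> w $ j \<le> 1) \<and> a \<bullet> w = b}"

definition slack :: "'n set \<Rightarrow> real ^ 'n \<Rightarrow> 'n \<Rightarrow> real" where
  "slack V w j = (if j \<in> V then 1 - w $ j else w $ j)"

definition transfer :: "'n set \<Rightarrow> 'n \<Rightarrow> 'n \<Rightarrow> real ^ 'n" where
  "transfer V i k = sign_vector V $ i *\<^sub>R axis i 1 - sign_vector V $ k *\<^sub>R axis k 1"

lemma sign_vector_nth [simp]: "sign_vector V $ j = (if j \<in> V then 1 else -1)"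
  by (simp add: sign_vector_def)

lemma inner_sign_vector_self: "sign_vector V \<bullet> sign_vector (V :: 'n::finite set) = real CARD('n)"
  by (simp add: inner_vec_def if_distrib cong: if_cong)

lemma unit_cube_slice_eq: "unit_cube_slice a b = cbox 0 1 \<inter> {w. a \<bullet> w = b}"
  by (auto simp: unit_cube_slice_def mem_box_cart)

lemma closed_unit_cube_slice: "closed (unit_cube_slice a b)"
  by (simp add: unit_cube_slice_eq closed_Int closed_cbox closed_hyperplane)

lemma convex_unit_cube_slice: "convex (unit_cube_slice a b)"
  by (simp add: unit_cube_slice_eq convex_Int convex_hyperplane)

lemma slack_nonneg: "w \<in> unit_cube_slice a b \<Longrightarrow> 0 \<le> slack V w j"
  by (simp add: unit_cube_slice_def slack_def)

lemma sum_slack: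
  assumes "sign_vector V \<bullet> w = real (card V) - 1"
  shows "(\<Sum>j\<in>UNIV. slack V w j) = 1"
proof -
  have "slack V w j = (if j \<in> V then 1 else 0) - sign_vector V $ j * w $ j" for j
    by (simp add: slack_def)
  then have "(\<Sum>j\<in>UNIV. slack V w j) = real (card V) - sign_vector V \<bullet> w"
    by (simp add: sum_subtractf inner_vec_def sum.If_cases)
  with assms show ?thesis by simp
qed

lemma inner_transfer: "y \<bullet> transfer V i k = sign_vector V $ i * y $ i - sign_vector V $ k * y $ k"
  by (simp add: transfer_def inner_diff_right inner_axis)

lemma sign_vector_inner_transfer: "sign_vector V \<bullet> transfer V i k = 0"
  by (simp add: inner_transfer)

lemma add_transfer_mem_unit_cube_slice:
  assumes w: "w \<in> unit_cube_slice (sign_vector V) (real (card V) - 1)" and "k \<noteq> i"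
  shows "w + slack V w i *\<^sub>R transfer V i k \<in> unit_cube_slice (sign_vector V) (real (card V) - 1)"
proof -
  have "slack V w i + slack V w k = sum (slack V w) {i, k}"
    using \<open>k \<noteq> i\<close> by simp
  also have "\<dots> \<le> sum (slack V w) UNIV"
    using w by (intro sum_mono2) (auto intro: slack_nonneg)
  finally have slacks_le: "slack V w i + slack V w k \<le> 1"
    using w sum_slack[of V w] by (simp add: unit_cube_slice_def)
  let ?u = "w + slack V w i *\<^sub>R transfer V i k"
  have u_nth: "?u $ j = (if j = i then (if i \<in> V then 1 else 0)
      else if j = k then w $ k - sign_vector V $ k * slack V w i else w $ j)" for j
    using \<open>k \<noteq> i\<close> by (simp add: transfer_def axis_def slack_def)
  have w01: "0 \<le> w $ j" "w $ j \<le> 1" for j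
    using w by (simp_all add: unit_cube_slice_def)
  have "0 \<le> ?u $ j \<and> ?u $ j \<le> 1" for j
    unfolding u_nth using w01[of i] w01[of k] w01[of j] slacks_le by (auto simp: slack_def)
  moreover have "sign_vector V \<bullet> ?u = real (card V) - 1"
    using w by (simp add: unit_cube_slice_def inner_add_right sign_vector_inner_transfer)
  ultimately show ?thesis
    by (simp add: unit_cube_slice_def)
qed

lemma closest_point_unit_cube_slice_transfer:
  fixes x :: "real ^ 'n" and V :: "'n set"
  defines "F \<equiv> unit_cube_slice (sign_vector V) (real (card V) - 1)"
  assumes "F \<noteq> {}" and "0 < slack V (closest_point F x) i"
  shows "sign_vector V $ i * (x - closest_point F x) $ i
           \<le> sign_vector V $ k * (x - closest_point F x) $ k"
proof (cases "k = i")
  case False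
  have "closest_point F x \<in> F"
    using \<open>F \<noteq> {}\<close> by (simp add: F_def closed_unit_cube_slice closest_point_in_set)
  then have "closest_point F x + slack V (closest_point F x) i *\<^sub>R transfer V i k \<in> F"
    using False by (simp add: F_def add_transfer_mem_unit_cube_slice)
  then have "(x - closest_point F x) \<bullet> transfer V i k \<le> 0"
    using assms(3) unfolding F_def
    by (intro closest_point_feasible_direction convex_unit_cube_slice closed_unit_cube_slice)
  then show ?thesis
    by (simp add: inner_transfer)
qed simp

lemma slack_closest_point_unit_cube_slice_le:
  fixes x :: "real ^ 'n" and V :: "'n set"
  defines "b \<equiv> real (card V) - 1"
  defines "F \<equiv> unit_cube_slice (sign_vector V) b"
    and "v \<equiv> closest_point {w. sign_vector V \<bullet> w = b} x"
  assumes "F \<noteq> {}" and "0 < slack V (closest_point F x) i"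
  shows "slack V (closest_point F x) i \<le> slack V v i"
proof -
  let ?\<theta> = "sign_vector V" and ?z = "closest_point F x"
  have "?\<theta> $ i * (x - ?z) $ i \<le> ?\<theta> $ k * (x - ?z) $ k" for k
    using closest_point_unit_cube_slice_transfer[of V x i k] assms(4,5) by (simp add: F_def b_def)
  then have "(\<Sum>k\<in>(UNIV :: 'n set). ?\<theta> $ i * (x - ?z) $ i) \<le> (\<Sum>k\<in>UNIV. ?\<theta> $ k * (x - ?z) $ k)"
    by (rule sum_mono)
  also have "\<dots> = ?\<theta> \<bullet> (x - ?z)"
    by (simp only: inner_vec_def inner_real_def)
  also have "\<dots> = ?\<theta> \<bullet> x - b"
    using closest_point_in_set[OF closed_unit_cube_slice \<open>F \<noteq> {}\<close>[unfolded F_def], of x]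
    by (simp add: F_def unit_cube_slice_def inner_diff_right)
  finally have z_bound: "?\<theta> $ i * (x - ?z) $ i \<le> (?\<theta> \<bullet> x - b) / real CARD('n)"
    by (simp add: field_simps)
  have "?\<theta> \<noteq> 0"
    by (metis sign_vector_nth zero_index zero_neq_one zero_neq_neg_one)
  then have "v = x - ((?\<theta> \<bullet> x - b) / real CARD('n)) *\<^sub>R ?\<theta>"
    unfolding v_def by (simp add: closest_point_hyperplane inner_sign_vector_self)
  then have "?\<theta> $ i * (x - v) $ i = (?\<theta> \<bullet> x - b) / real CARD('n)"
    by simp
  with z_bound show ?thesis
    by (simp add: slack_def split: if_splits)
qed

lemma slack_closest_point_unit_cube_slice_eq_0:
  fixes x :: "real ^ 'n" and V :: "'n set"
  defines "b \<equiv> real (card V) - 1"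
  defines "F \<equiv> unit_cube_slice (sign_vector V) b"
  assumes "F \<noteq> {}" and "slack V (closest_point {w. sign_vector V \<bullet> w = b} x) i < 0"
  shows "slack V (closest_point F x) i = 0"
proof -
  have "closest_point F x \<in> F"
    using \<open>F \<noteq> {}\<close> by (simp add: F_def closed_unit_cube_slice closest_point_in_set)
  then have "0 \<le> slack V (closest_point F x) i"
    unfolding F_def by (rule slack_nonneg)
  with assms(3,4) show ?thesis
    unfolding F_def b_def using slack_closest_point_unit_cube_slice_le[of V x i] by fastforce
qed

theorem theorem2:
  fixes x \<theta> :: "real ^ 'n" and V :: "'n set" and i :: 'n
  assumes "CARD('n) \<ge> 2"
    and "\<forall>j. (j \<in> V \<longrightarrow> \<theta> $ j = 1) \<and> (j \<notin> V \<longrightarrow> \<theta> $ j = -1)"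
    and "{w :: real ^ 'n. (\<forall>j. 0 \<le> w $ j \<and> w $ j \<le> 1) \<and> \<theta> \<bullet> w = real (card V) - 1} \<noteq> {}"
  shows "(closest_point {w. \<theta> \<bullet> w = real (card V) - 1} x $ i > 1 \<and> \<theta> $ i = 1 \<longrightarrow>
           closest_point {w. (\<forall>j. 0 \<le> w $ j \<and> w $ j \<le> 1) \<and> \<theta> \<bullet> w = real (card V) - 1} x $ i = 1)
       \<and> (closest_point {w. \<theta> \<bullet> w = real (card V) - 1} x $ i < 0 \<and> \<theta> $ i = -1 \<longrightarrow>
           closest_point {w. (\<forall>j. 0 \<le> w $ j \<and> w $ j \<le> 1) \<and> \<theta> \<bullet> w = real (card V) - 1} x $ i = 0)"
proof -
  have \<theta>: "\<theta> = sign_vector V"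
    using assms(2) by (auto simp: vec_eq_iff)
  define b where "b = real (card V) - 1"
  define F where "F = unit_cube_slice (sign_vector V) b"
  have "F \<noteq> {}"
    using assms(3) by (simp add: F_def unit_cube_slice_def \<theta> b_def)
  then have "slack V (closest_point {w. sign_vector V \<bullet> w = b} x) i < 0
      \<Longrightarrow> slack V (closest_point F x) i = 0"
    unfolding F_def b_def by (rule slack_closest_point_unit_cube_slice_eq_0)
  then show ?thesis
    using assms(2) by (auto simp: \<theta> F_def b_def unit_cube_slice_def slack_def)
qed

end
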